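(* Consider the Que Sera Consensus (QSC) protocol, as described in the context, running on $n$ nodes atop a full-spread threshold synchronous broadcast primitive $\mathrm{TSB}(t_r,t_b,n)$ with $t_r>0$ and $t_b>0$. If the network's choice of the sets $N_R$ and $N_B$ (determining which messages each node receives and learns were reliably broadcast) is independent of the proposal priorities, and $p_t$ is the probability that two nodes tie for highest priority in a round, then each node delivers a history in each round independently with probability at least $t_b/n-p_t$.
   Context: Threshold synchronous broadcast (TSB). A group of $n$ nodes, numbered $1,\dots,n$, operates in integer logical time-steps $0,1,2,\dots$. Nodes may fail only by crashing permanently. In each time-step every non-failed node calls $\mathrm{Broadcast}(m)$ exactly once; the call returns a pair $(R,B)$ of message sets. A primitive provides $\mathrm{TSB}(t_r,t_b,t_s)$ if: (lock-step synchrony) a call to $\mathrm{Broadcast}(m)$ at step $s$ returns at step $s+1$ unless the node fails before reaching step $s+1$; (receive threshold) if node $i$'s call at step $s$ returns $(R,B)$, there is $N_R\subseteq\{1,\dots,n\}$ with $|N_R|\ge t_r$ such that $R$ is exactly the set of messages broadcast by the nodes in $N_R$ during step $s$; (broadcast threshold) there is $N_B\subseteq\{1,\dots,n\}$ with $|N_B|\ge t_b$ such that $B$ is exactly the set of messages broadcast by the nodes in $N_B$ during step $s$; (spread threshold) if some node's call at step $s$ returns $(R,B)$ with $m'\in B$, then there are at least $t_s$ nodes whose receive sets $R$ returned from their step-$s$ calls include $m'$ (a node that fails before completing step $s$ counts if it would have received $m'$ had it not failed). The case $t_s=n$ is called full-spread. Histories and priorities. A proposal is a triple $\langle i,m,r\rangle$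 (node, message, numeric priority). A history is a finite list of proposals; $[]$ is the empty history and $\|$ is list concatenation. The priority of a nonempty history is the priority $r$ of its last proposal. A history $h$ is best in a set $H$ if $h\in H$ and no $h'\in H$ has strictly greater priority; $h$ is uniquely best in $H$ if $h\in H$ and no other $h'\ne h$ in $H$ has priority greater than or equal to that of $h$. QSC protocol. It is parameterized by functions ChooseMessage (returns some message, possibly empty), Deliver (passes a history to the application), RandomValue (returns a value drawn using node-private randomness, independently on each node, from a fixed nontrivial distribution that is the same on every node), and Broadcast (the TSB primitive). Each node $i$ runs: set $h\leftarrow[]$; then forever repeat a consensus round: $m\leftarrow\mathrm{ChooseMessage}()$; $r\leftarrow\mathrm{RandomValue}()$; $h'\leftarrow h\,\|\,[\langle i,m,r\rangle]$; $(R',B')\leftarrow\mathrm{Broadcast}(h')$; $h''\leftarrow$ any best history in $B'$; $(R'',B'')\leftarrow\mathrm{Broadcast}(h'')$; $h\leftarrow$ any best history in $R''$; if $h\in B''$ and $h$ is uniquely best in $R'$, call $\mathrm{Deliver}(h)$. Each round occupies two time-steps. *)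

theory Defs
  imports "HOL-Probability.Probability"
begin

text \<open>Nodes are natural numbers 1..n; priorities are real numbers.
  A proposal is a triple (node, message, priority); a history is a list of proposals.\<close>

type_synonym 'm proposal = "nat \<times> 'm \<times> real"
type_synonym 'm history = "'m proposal list"

definition prio :: "'m history \<Rightarrow> real" where
  "prio h = snd (snd (last h))"

definition is_best :: "'m history \<Rightarrow> 'm history set \<Rightarrow> bool" where
  "is_best h H \<longleftrightarrow> h \<in> H \<and> (\<forall>h'\<in>H. \<not> prio h' > prio h)"

definition uniquely_best :: "'m history \<Rightarrow> 'm history set \<Rightarrow> bool" where
  "uniquely_best h H \<longleftrightarrow> h \<in> H \<and> (\<forall>h'\<in>H. h' \<noteq> h \<longrightarrow> \<not> prio h' \<ge> prio h)"

text \<open>The network is described by: alive t j (node j has not crashed and calls Broadcast at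
  time-step t), and for every step t and node i the node sets NR t i and NB t i.
  msg t j is the message broadcast by node j at step t.  R = msg t ` NR t i and
  B = msg t ` NB t i.  For a node that fails, NR t i is the receive set it would have had
  (used by the spread threshold).\<close>

definition is_TSB ::
  "nat \<Rightarrow> nat \<Rightarrow> nat \<Rightarrow> nat \<Rightarrow> (nat \<Rightarrow> nat \<Rightarrow> bool) \<Rightarrow> (nat \<Rightarrow> nat \<Rightarrow> nat set)
     \<Rightarrow> (nat \<Rightarrow> nat \<Rightarrow> nat set) \<Rightarrow> (nat \<Rightarrow> nat \<Rightarrow> 'a) \<Rightarrow> bool" where
  "is_TSB n tr tb ts alive NR NB msg \<longleftrightarrow>
     (\<forall>t i. i \<in> {1..n} \<longrightarrow> NR t i \<subseteq> {j \<in> {1..n}. alive t j}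
                        \<and> NB t i \<subseteq> {j \<in> {1..n}. alive t j}) \<and>
     (\<forall>t i. i \<in> {1..n} \<longrightarrow> alive (Suc t) i \<longrightarrow> card (NR t i) \<ge> tr \<and> card (NB t i) \<ge> tb) \<and>
     (\<forall>t i m. i \<in> {1..n} \<longrightarrow> alive (Suc t) i \<longrightarrow> m \<in> msg t ` NB t i \<longrightarrow>
          card {j \<in> {1..n}. m \<in> msg t ` NR t j} \<ge> ts)"

text \<open>omega (s, j) is the value returned by RandomValue at node j in round s.
  chooseMsg j s h is ChooseMessage at node j in round s with current history h;
  pickBest j t H is the (arbitrary) choice of a best history in H made by node j at step t.
  Round s occupies time-steps 2s and 2s+1.  H is the vector of histories at round start.\<close>

definition qsc_h1 ::
  "(nat \<Rightarrow> nat \<Rightarrow> 'm history \<Rightarrow> 'm) \<Rightarrow> (nat \<Rightarrow> 'm history) \<Rightarrow> nat \<Rightarrow> (nat \<times> nat \<Rightarrow> real)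
     \<Rightarrow> nat \<Rightarrow> 'm history" where
  "qsc_h1 chooseMsg H s \<omega> l = H l @ [(l, chooseMsg l s (H l), \<omega> (s, l))]"

definition qsc_h2 ::
  "(nat \<Rightarrow> nat \<Rightarrow> 'm history \<Rightarrow> 'm) \<Rightarrow> (nat \<Rightarrow> nat \<Rightarrow> 'm history set \<Rightarrow> 'm history)
     \<Rightarrow> (nat \<Rightarrow> nat \<Rightarrow> nat set) \<Rightarrow> (nat \<Rightarrow> 'm history) \<Rightarrow> nat \<Rightarrow> (nat \<times> nat \<Rightarrow> real)
     \<Rightarrow> nat \<Rightarrow> 'm history" where
  "qsc_h2 chooseMsg pickBest NB H s \<omega> k = pickBest k (2 * s) (qsc_h1 chooseMsg H s \<omega> ` NB (2 * s) k)"

primrec qsc_hist ::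
  "(nat \<Rightarrow> nat \<Rightarrow> 'm history \<Rightarrow> 'm) \<Rightarrow> (nat \<Rightarrow> nat \<Rightarrow> 'm history set \<Rightarrow> 'm history)
     \<Rightarrow> (nat \<Rightarrow> nat \<Rightarrow> nat set) \<Rightarrow> (nat \<Rightarrow> nat \<Rightarrow> nat set) \<Rightarrow> (nat \<times> nat \<Rightarrow> real)
     \<Rightarrow> nat \<Rightarrow> nat \<Rightarrow> 'm history" where
  "qsc_hist chooseMsg pickBest NR NB \<omega> 0 = (\<lambda>_. [])"
| "qsc_hist chooseMsg pickBest NR NB \<omega> (Suc s) =
     (\<lambda>j. pickBest j (2 * s+1)
            (qsc_h2 chooseMsg pickBest NB (qsc_hist chooseMsg pickBest NR NB \<omega> s) s \<omega> ` NR (2 * s+1) j))"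

definition qsc_msg ::
  "(nat \<Rightarrow> nat \<Rightarrow> 'm history \<Rightarrow> 'm) \<Rightarrow> (nat \<Rightarrow> nat \<Rightarrow> 'm history set \<Rightarrow> 'm history)
     \<Rightarrow> (nat \<Rightarrow> nat \<Rightarrow> nat set) \<Rightarrow> (nat \<Rightarrow> nat \<Rightarrow> nat set) \<Rightarrow> (nat \<times> nat \<Rightarrow> real)
     \<Rightarrow> nat \<Rightarrow> nat \<Rightarrow> 'm history" where
  "qsc_msg chooseMsg pickBest NR NB \<omega> t =
     (let s = t div 2; H = qsc_hist chooseMsg pickBest NR NB \<omega> s in
      if even t then qsc_h1 chooseMsg H s \<omega> else qsc_h2 chooseMsg pickBest NB H s \<omega>)"

definition qsc_delivers ::
  "(nat \<Rightarrow> nat \<Rightarrow> 'm history \<Rightarrow> 'm) \<Rightarrow> (nat \<Rightarrow> nat \<Rightarrow> 'm history set \<Rightarrow> 'm history)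
     \<Rightarrow> (nat \<Rightarrow> nat \<Rightarrow> nat set) \<Rightarrow> (nat \<Rightarrow> nat \<Rightarrow> nat set) \<Rightarrow> (nat \<times> nat \<Rightarrow> real)
     \<Rightarrow> nat \<Rightarrow> nat \<Rightarrow> bool" where
  "qsc_delivers chooseMsg pickBest NR NB \<omega> s i =
     (let H = qsc_hist chooseMsg pickBest NR NB \<omega> s;
          h = qsc_hist chooseMsg pickBest NR NB \<omega> (Suc s) i in
      h \<in> qsc_h2 chooseMsg pickBest NB H s \<omega> ` NB (2 * s+1) i \<and>
      uniquely_best h (qsc_h1 chooseMsg H s \<omega> ` NR (2 * s) i))"

definition tie_prob :: "real measure \<Rightarrow> nat \<Rightarrow> real" where
  "tie_prob D n = measure (PiM {1..n} (\<lambda>_. D))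
     {x \<in> space (PiM {1..n} (\<lambda>_. D)). \<exists>j\<in>{1..n}. \<exists>k\<in>{1..n}. j \<noteq> k \<and> x j = x k \<and>
                                   (\<forall>l\<in>{1..n}. x l \<le> x j)}"

end

theory Submission
  imports Defs
begin

(* Under full spread, a message that some live node sees reliably broadcast in a step is received
  by every node in that step.  Applied to both steps of round s, this shows that node i delivers
  exactly when one of the proposals that can reach it as "best of a reliably broadcast set" has
  strictly the highest priority among the proposals i received.  This event depends on the
  priorities of round s only, and the network sets do not depend on the priorities, so the events
  of distinct rounds are independent.  At least t_b proposers qualify, and by symmetry of i.i.d.
  priorities each of the n nodes is the unique maximum with probability (1 - p_t)/n, which gives
  the bound t_b (1 - p_t)/n >= t_b/n - p_t. *)

definition is_strict_max_on :: "'i set \<Rightarrow> ('i \<Rightarrow> real) \<Rightarrow> 'i \<Rightarrow> bool" where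
  "is_strict_max_on I x l \<longleftrightarrow> (\<forall>l'\<in>I. l' \<noteq> l \<longrightarrow> x l' < x l)"

lemma is_strict_max_on_subset:
  "is_strict_max_on I x l \<Longrightarrow> J \<subseteq> I \<Longrightarrow> is_strict_max_on J x l"
  unfolding is_strict_max_on_def by blast

lemma is_strict_max_on_unique:
  "is_strict_max_on I x l \<Longrightarrow> l' \<in> I \<Longrightarrow> x l \<le> x l' \<Longrightarrow> l' = l"
  unfolding is_strict_max_on_def by (auto simp: not_less[symmetric])

lemma is_strict_max_on_restrict:
  "l \<in> I \<Longrightarrow> is_strict_max_on I (restrict x I) l \<longleftrightarrow> is_strict_max_on I x l"
  unfolding is_strict_max_on_def by simp

lemma is_strict_max_on_bij_betw:
  assumes "bij_betw g I I" "l \<in> I"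
  shows "is_strict_max_on I (\<lambda>i. x (g i)) l \<longleftrightarrow> is_strict_max_on I x (g l)"
proof -
  have "g ` I = I" "inj_on g I" using assms(1) by (auto simp: bij_betw_def)
  then have "is_strict_max_on I (\<lambda>i. x (g i)) l \<longleftrightarrow> is_strict_max_on (g ` I) x (g l)"
    using inj_on_eq_iff[of g I _ l] assms(2) unfolding is_strict_max_on_def by auto
  with \<open>g ` I = I\<close> show ?thesis by simp
qed

lemma disjoint_family_on_strict_max:
  "disjoint_family_on (\<lambda>l. {x \<in> S. is_strict_max_on I x l}) I"
  unfolding disjoint_family_on_def
proof (intro ballI impI)
  fix a b assume ab: "a \<in> I" "b \<in> I" "a \<noteq> b"
  have False if "is_strict_max_on I x a" "is_strict_max_on I x b" for x
  proof -
    have "x b < x a" "x a < x b" using ab that unfolding is_strict_max_on_def by auto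
    then show False by simp
  qed
  then show "{x \<in> S. is_strict_max_on I x a} \<inter> {x \<in> S. is_strict_max_on I x b} = {}" by blast
qed

lemma ex_strict_max_iff_no_tie:
  fixes x :: "'i \<Rightarrow> real"
  assumes "finite I" "I \<noteq> {}"
  shows "(\<exists>l\<in>I. is_strict_max_on I x l) \<longleftrightarrow>
    \<not> (\<exists>j\<in>I. \<exists>k\<in>I. j \<noteq> k \<and> x j = x k \<and> (\<forall>l\<in>I. x l \<le> x j))"
proof
  assume "\<exists>l\<in>I. is_strict_max_on I x l"
  then obtain l where l: "l \<in> I" "is_strict_max_on I x l" by blast
  show "\<not> (\<exists>j\<in>I. \<exists>k\<in>I. j \<noteq> k \<and> x j = x k \<and> (\<forall>l\<in>I. x l \<le> x j))"
  proof
    assume "\<exists>j\<in>I. \<exists>k\<in>I. j \<noteq> k \<and> x j = x k \<and> (\<forall>l\<in>I. x l \<le> x j)"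
    then obtain j k where jk: "j \<in> I" "k \<in> I" "j \<noteq> k" "x j = x k" "\<forall>l\<in>I. x l \<le> x j"
      by blast
    have "x l \<le> x j" using jk(5) l(1) by blast
    moreover have "x j < x l \<or> x k < x l"
      using jk l(2) unfolding is_strict_max_on_def by (cases "j = l") auto
    ultimately show False using jk(4) by auto
  qed
next
  assume no_tie: "\<not> (\<exists>j\<in>I. \<exists>k\<in>I. j \<noteq> k \<and> x j = x k \<and> (\<forall>l\<in>I. x l \<le> x j))"
  have "Max (x ` I) \<in> x ` I" using assms by (intro Max_in) auto
  then obtain j where "j \<in> I" "x j = Max (x ` I)" by (metis imageE)
  then have j: "j \<in> I" "\<forall>l\<in>I. x l \<le> x j" using assms by simp_all
  have "x l' < x j" if "l' \<in> I" "l' \<noteq> j" for l'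
  proof -
    have "x l' \<noteq> x j"
    proof
      assume "x l' = x j"
      with j that have "\<exists>j\<in>I. \<exists>k\<in>I. j \<noteq> k \<and> x j = x k \<and> (\<forall>l\<in>I. x l \<le> x j)"
        by (intro bexI[of _ j] bexI[of _ l']) auto
      with no_tie show False by blast
    qed
    with j(2) that(1) show ?thesis by (simp add: less_le)
  qed
  with j(1) show "\<exists>l\<in>I. is_strict_max_on I x l" unfolding is_strict_max_on_def by blast
qed

(* Node i's view of one round: h1 l is the proposal of node l, h2 k the history node k picked
  from the proposals it saw reliably broadcast (B k), A and K, R are the sets N_R of the first
  and N_B, N_R of the second step at node i, and h is the history i adopts. *)
lemma best_of_bests_iff_strict_max:
  fixes h1 :: "'i \<Rightarrow> 'm history" and h2 :: "'k \<Rightarrow> 'm history"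
  assumes inj: "inj h1"
    and best2: "\<And>k. k \<in> K \<union> R \<Longrightarrow> is_best (h2 k) (h1 ` B k)"
    and B_sub: "\<And>k. k \<in> K \<union> R \<Longrightarrow> B k \<subseteq> A"
    and spread: "h2 ` K \<subseteq> h2 ` R"
    and best: "is_best h (h2 ` R)"
  shows "h \<in> h2 ` K \<and> uniquely_best h (h1 ` A) \<longleftrightarrow>
    (\<exists>l\<in>\<Union>(B ` K). is_strict_max_on A (prio \<circ> h1) l)"
proof
  assume delivered: "h \<in> h2 ` K \<and> uniquely_best h (h1 ` A)"
  then obtain k where k: "k \<in> K" "h = h2 k" by blast
  with best2 obtain l where l: "l \<in> B k" "h = h1 l" unfolding is_best_def by blast
  have "prio (h1 l') < prio (h1 l)" if "l' \<in> A" "l' \<noteq> l" for l'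
  proof -
    have "h1 l' \<in> h1 ` A" "h1 l' \<noteq> h" using that l inj by (auto dest: injD)
    then have "\<not> prio h \<le> prio (h1 l')" using delivered unfolding uniquely_best_def by blast
    then show ?thesis using l(2) by simp
  qed
  then have "is_strict_max_on A (prio \<circ> h1) l" unfolding is_strict_max_on_def by simp
  with k l show "\<exists>l\<in>\<Union>(B ` K). is_strict_max_on A (prio \<circ> h1) l" by blast
next
  assume "\<exists>l\<in>\<Union>(B ` K). is_strict_max_on A (prio \<circ> h1) l"
  then obtain k l where k: "k \<in> K" and l: "l \<in> B k"
    and max: "is_strict_max_on A (prio \<circ> h1) l" by blast
  have lA: "l \<in> A" using B_sub k l by blast
  have h2k: "h2 k = h1 l"
  proof -
    have best_k: "is_best (h2 k) (h1 ` B k)" using best2 k by blast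
    then obtain l0 where l0: "l0 \<in> B k" "h2 k = h1 l0" unfolding is_best_def by blast
    have "prio (h1 l) \<le> prio (h1 l0)"
      using best_k l l0(2) unfolding is_best_def by (auto simp: not_less)
    then have "l0 = l" using is_strict_max_on_unique[OF max] B_sub k l0(1) by auto
    with l0(2) show ?thesis by simp
  qed
  have h_eq: "h = h1 l"
  proof -
    obtain k' where k': "k' \<in> R" "h = h2 k'" using best unfolding is_best_def by blast
    then obtain l1 where l1: "l1 \<in> B k'" "h = h1 l1" using best2 unfolding is_best_def by blast
    have "h2 k \<in> h2 ` R" using spread k by blast
    then have "prio (h1 l) \<le> prio (h1 l1)"
      using best h2k l1(2) unfolding is_best_def by (auto simp: not_less)
    then have "l1 = l" using is_strict_max_on_unique[OF max] B_sub k' l1(1) by auto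
    with l1(2) show ?thesis by simp
  qed
  have "h \<in> h2 ` K" using k by (simp add: h_eq h2k[symmetric])
  moreover have "uniquely_best h (h1 ` A)"
    using lA max h_eq unfolding uniquely_best_def is_strict_max_on_def by (auto simp: not_le)
  ultimately show "h \<in> h2 ` K \<and> uniquely_best h (h1 ` A)" ..
qed

lemma borel_measurable_PiM_component:
  assumes "sets D = sets borel"
  shows "(\<lambda>x. x c) \<in> borel_measurable (PiM K (\<lambda>_. D))"
proof (cases "c \<in> K")
  case True
  then have "(\<lambda>x. x c) \<in> measurable (PiM K (\<lambda>_. D)) D" by measurable
  then show ?thesis using measurable_cong_sets[OF refl assms] by blast
next
  case False
  then have "\<And>x. x \<in> space (PiM K (\<lambda>_. D)) \<Longrightarrow> x c = undefined"
    by (auto simp: space_PiM PiE_def extensional_def)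
  then show ?thesis using measurable_cong[of "PiM K (\<lambda>_. D)" "\<lambda>x. x c" "\<lambda>_. undefined"] by simp
qed

lemma pred_is_strict_max_on_PiM:
  fixes D :: "real measure"
  assumes "sets D = sets borel" "finite A"
  shows "Measurable.pred (PiM K (\<lambda>_. D)) (\<lambda>x. is_strict_max_on A (\<lambda>l. x (f l)) l)"
proof -
  note [measurable] = borel_measurable_PiM_component[OF assms(1)]
  show ?thesis unfolding is_strict_max_on_def using assms(2) by measurable
qed

lemma sets_PiM_ex_strict_max:
  fixes D :: "real measure"
  assumes "sets D = sets borel" "finite U" "finite A"
  shows "{x \<in> space (PiM K (\<lambda>_. D)). \<exists>l\<in>U. is_strict_max_on A (\<lambda>l. x (f l)) l}
    \<in> sets (PiM K (\<lambda>_. D))"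
  using pred_is_strict_max_on_PiM[OF assms(1,3)] assms(2) unfolding pred_def
  by (rule sets.sets_Collect_finite_Ex)

lemma measure_PiM_reindex:
  assumes D: "prob_space D" and f: "inj_on f I" "f \<in> I \<rightarrow> J" and S: "S \<in> sets (PiM I (\<lambda>_. D))"
  shows "measure (PiM J (\<lambda>_. D)) {\<omega> \<in> space (PiM J (\<lambda>_. D)). (\<lambda>i\<in>I. \<omega> (f i)) \<in> S} =
    measure (PiM I (\<lambda>_. D)) S"
proof -
  let ?r = "\<lambda>\<omega>. \<lambda>i\<in>I. \<omega> (f i)"
  have r: "?r \<in> measurable (PiM J (\<lambda>_. D)) (PiM I (\<lambda>_. D))"
    using f(2) by (auto intro!: measurable_restrict measurable_component_singleton)
  have "measure (PiM I (\<lambda>_. D)) S = measure (distr (PiM J (\<lambda>_. D)) (PiM I (\<lambda>_. D)) ?r) S"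
    using distr_PiM_reindex[of J "\<lambda>_. D" f I] D f by simp
  also have "\<dots> = measure (PiM J (\<lambda>_. D)) (?r -` S \<inter> space (PiM J (\<lambda>_. D)))"
    by (rule measure_distr[OF r S])
  finally show ?thesis by (simp add: vimage_def Int_def conj_commute)
qed

lemma measure_PiM_strict_max_eq:
  fixes D :: "real measure"
  assumes D: "prob_space D" "sets D = sets borel" and I: "finite I" "a \<in> I" "b \<in> I"
  shows "measure (PiM I (\<lambda>_. D)) {x \<in> space (PiM I (\<lambda>_. D)). is_strict_max_on I x a} =
    measure (PiM I (\<lambda>_. D)) {x \<in> space (PiM I (\<lambda>_. D)). is_strict_max_on I x b}"
proof -
  let ?P = "PiM I (\<lambda>_. D)" and ?\<tau> = "Transposition.transpose a b"
  have bij: "bij_betw ?\<tau> I I" using I by simp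
  have "{x \<in> space ?P. is_strict_max_on I x b} \<in> sets ?P"
    using pred_is_strict_max_on_PiM[OF D(2) I(1), where K=I and f="\<lambda>l. l" and l=b]
    unfolding pred_def by simp
  then have "measure ?P {x \<in> space ?P. (\<lambda>i\<in>I. x (?\<tau> i)) \<in> {y \<in> space ?P. is_strict_max_on I y b}} =
      measure ?P {x \<in> space ?P. is_strict_max_on I x b}"
    using bij by (intro measure_PiM_reindex D(1)) (auto simp: bij_betw_def)
  moreover have "(\<lambda>i\<in>I. x (?\<tau> i)) \<in> space ?P" if "x \<in> space ?P" for x
    using that bij by (auto simp: space_PiM bij_betw_def)
  then have "{x \<in> space ?P. (\<lambda>i\<in>I. x (?\<tau> i)) \<in> {y \<in> space ?P. is_strict_max_on I y b}} =
      {x \<in> space ?P. is_strict_max_on I x a}"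
    using is_strict_max_on_restrict[OF I(3)] is_strict_max_on_bij_betw[OF bij I(3)] by auto
  ultimately show ?thesis by simp
qed

lemma measure_PiM_ex_strict_max:
  fixes D :: "real measure"
  assumes D: "prob_space D" "sets D = sets borel" and "0 < n" "U \<subseteq> {1..n}"
  shows "measure (PiM {1..n} (\<lambda>_. D))
      {x \<in> space (PiM {1..n} (\<lambda>_. D)). \<exists>l\<in>U. is_strict_max_on {1..n} x l} =
    card U * (1 - tie_prob D n) / n"
proof -
  let ?P = "PiM {1..n} (\<lambda>_. D)"
  interpret P: prob_space ?P by (rule prob_space_PiM) (use D in auto)
  define E where "E l = {x \<in> space ?P. is_strict_max_on {1..n} x l}" for l
  have E_sets: "E l \<in> P.events" for l
    using pred_is_strict_max_on_PiM[OF D(2), where A="{1..n}" and K="{1..n}" and f="\<lambda>l. l" and l=l]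
    unfolding E_def pred_def by simp
  have "disjoint_family_on E {1..n}"
    unfolding E_def by (rule disjoint_family_on_strict_max)
  have measure_UN_E: "measure ?P (\<Union>l\<in>V. E l) = card V * measure ?P (E 1)" if "V \<subseteq> {1..n}" for V
  proof -
    have "measure ?P (\<Union>l\<in>V. E l) = (\<Sum>l\<in>V. measure ?P (E l))"
      using that E_sets \<open>disjoint_family_on E {1..n}\<close>
      by (intro P.finite_measure_finite_Union) (auto intro: finite_subset disjoint_family_on_mono)
    also have "\<dots> = (\<Sum>l\<in>V. measure ?P (E 1))"
      using that \<open>0 < n\<close> unfolding E_def
      by (intro sum.cong refl measure_PiM_strict_max_eq[OF D]) auto
    finally show ?thesis by simp
  qed
  have no_tie: "(\<exists>l\<in>{1..n}. is_strict_max_on {1..n} x l) \<longleftrightarrow>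
      \<not> (\<exists>j\<in>{1..n}. \<exists>k\<in>{1..n}. j \<noteq> k \<and> x j = x k \<and> (\<forall>l\<in>{1..n}. x l \<le> x j))" for x
    using \<open>0 < n\<close> by (intro ex_strict_max_iff_no_tie) auto
  have "space ?P - (\<Union>l\<in>{1..n}. E l) =
      {x \<in> space ?P. \<not> (\<exists>l\<in>{1..n}. is_strict_max_on {1..n} x l)}"
    unfolding E_def by blast
  also have "\<dots> =
      {x \<in> space ?P. \<exists>j\<in>{1..n}. \<exists>k\<in>{1..n}. j \<noteq> k \<and> x j = x k \<and> (\<forall>l\<in>{1..n}. x l \<le> x j)}"
    by (simp only: no_tie not_not)
  finally have "tie_prob D n = measure ?P (space ?P - (\<Union>l\<in>{1..n}. E l))"
    unfolding tie_prob_def by simp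
  also have "\<dots> = 1 - n * measure ?P (E 1)"
    using P.prob_compl[of "\<Union>l\<in>{1..n}. E l"] E_sets measure_UN_E[of "{1..n}"] by auto
  finally have "tie_prob D n = 1 - n * measure ?P (E 1)" .
  moreover have "{x \<in> space ?P. \<exists>l\<in>U. is_strict_max_on {1..n} x l} = (\<Union>l\<in>U. E l)"
    unfolding E_def by blast
  ultimately show ?thesis using measure_UN_E[OF \<open>U \<subseteq> {1..n}\<close>] \<open>0 < n\<close> by simp
qed

lemma measure_round_ex_strict_max:
  fixes D :: "real measure"
  assumes D: "prob_space D" "sets D = sets borel" and n: "0 < n" and U: "U \<subseteq> {1..n}"
  shows "measure (PiM UNIV (\<lambda>_::nat \<times> nat. D))
      {\<omega> \<in> space (PiM UNIV (\<lambda>_::nat \<times> nat. D)). \<exists>l\<in>U. is_strict_max_on {1..n} (\<lambda>l. \<omega> (s, l)) l} =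
    card U * (1 - tie_prob D n) / n"
proof -
  let ?P = "PiM {1..n} (\<lambda>_. D)" and ?M = "PiM UNIV (\<lambda>_::nat \<times> nat. D)"
  let ?S = "{x \<in> space ?P. \<exists>l\<in>U. is_strict_max_on {1..n} x l}"
  have "?S \<in> sets ?P"
    using sets_PiM_ex_strict_max[OF D(2), where K="{1..n}" and f="\<lambda>l. l" and A="{1..n}" and U=U] U
    by (auto intro: finite_subset)
  then have "measure ?M {\<omega> \<in> space ?M. (\<lambda>l\<in>{1..n}. \<omega> (s, l)) \<in> ?S} = measure ?P ?S"
    by (intro measure_PiM_reindex D(1)) (auto simp: inj_on_def)
  moreover have "{\<omega> \<in> space ?M. (\<lambda>l\<in>{1..n}. \<omega> (s, l)) \<in> ?S} =
      {\<omega> \<in> space ?M. \<exists>l\<in>U. is_strict_max_on {1..n} (\<lambda>l. \<omega> (s, l)) l}"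
    using U is_strict_max_on_restrict[of _ "{1..n}"] by (auto simp: space_PiM subset_iff)
  ultimately show ?thesis using measure_PiM_ex_strict_max[OF D n U] by simp
qed

lemma indep_vars_PiM_components:
  assumes M: "\<And>i. i \<in> I \<Longrightarrow> prob_space (M i)"
  shows "prob_space.indep_vars (PiM I M) M (\<lambda>i \<omega>. \<omega> i) I"
proof -
  interpret prob_space "PiM I M" using M by (rule prob_space_PiM)
  show ?thesis
  proof (cases "I = {}")
    case True
    then show ?thesis unfolding indep_vars_def indep_sets_def by simp
  next
    case False
    have "distr (PiM I M) (PiM I M) (\<lambda>\<omega>. \<lambda>i\<in>I. \<omega> i) = distr (PiM I M) (PiM I M) (\<lambda>\<omega>. \<omega>)"
      by (rule distr_cong) (auto simp: space_PiM PiE_restrict)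
    also have "\<dots> = PiM I M" by (rule distr_id)
    also have "\<dots> = PiM I (\<lambda>i. distr (PiM I M) (M i) (\<lambda>\<omega>. \<omega> i))"
      by (rule PiM_cong) (simp_all add: distr_PiM_component M)
    finally show ?thesis
      using False
      by (subst indep_vars_iff_distr_eq_PiM') (auto intro: measurable_component_singleton)
  qed
qed

lemma indep_events_PiM_blocks:
  assumes M: "\<And>i. i \<in> I \<Longrightarrow> prob_space (M i)"
    and K: "\<And>s. s \<in> L \<Longrightarrow> K s \<subseteq> I" "disjoint_family_on K L"
    and P: "\<And>s. s \<in> L \<Longrightarrow> {x \<in> space (PiM (K s) M). P s x} \<in> sets (PiM (K s) M)"
  shows "prob_space.indep_events (PiM I M) (\<lambda>s. {\<omega> \<in> space (PiM I M). P s (restrict \<omega> (K s))}) L"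
proof -
  interpret prob_space "PiM I M" using M by (rule prob_space_PiM)
  show ?thesis
    using indep_vars_restrict[OF indep_vars_PiM_components[OF M] K] P
    by (rule indep_eventsI_indep_vars)
qed

lemma is_TSB_member:
  assumes "is_TSB n tr tb ts alive NR NB msg" "j \<in> {1..n}" "k \<in> NR t j \<union> NB t j"
  shows "k \<in> {1..n}" "alive t k"
  using assms unfolding is_TSB_def by blast+

lemma is_TSB_finite:
  assumes "is_TSB n tr tb ts alive NR NB msg" "j \<in> {1..n}"
  shows "finite (NR t j)" "finite (NB t j)"
  using is_TSB_member(1)[OF assms] by (meson UnCI finite_atLeastAtMost finite_subset subsetI)+

lemma is_TSB_card:
  assumes "is_TSB n tr tb ts alive NR NB msg" "j \<in> {1..n}" "alive (Suc t) j"
  shows "tr \<le> card (NR t j)" "tb \<le> card (NB t j)"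
  using assms unfolding is_TSB_def by blast+

lemma is_TSB_full_spread:
  assumes "is_TSB n tr tb n alive NR NB msg" "i \<in> {1..n}" "j \<in> {1..n}" "alive (Suc t) j"
    and "m \<in> msg t ` NB t j"
  shows "m \<in> msg t ` NR t i"
proof -
  let ?S = "{j' \<in> {1..n}. m \<in> msg t ` NR t j'}"
  have "n \<le> card ?S" using assms unfolding is_TSB_def by blast
  then have "?S = {1..n}" by (intro card_seteq) auto
  with assms(2) show ?thesis by blast
qed

lemma inj_qsc_h1: "inj (qsc_h1 chooseMsg H s \<omega>)"
  by (rule injI) (simp add: qsc_h1_def)

lemma prio_qsc_h1: "prio (qsc_h1 chooseMsg H s \<omega> l) = \<omega> (s, l)"
  by (simp add: qsc_h1_def prio_def)

lemma qsc_msg_round: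
  "qsc_msg chooseMsg pickBest NR NB \<omega> (2 * s) =
     qsc_h1 chooseMsg (qsc_hist chooseMsg pickBest NR NB \<omega> s) s \<omega>"
  "qsc_msg chooseMsg pickBest NR NB \<omega> (Suc (2 * s)) =
     qsc_h2 chooseMsg pickBest NB (qsc_hist chooseMsg pickBest NR NB \<omega> s) s \<omega>"
  by (simp_all add: qsc_msg_def)

locale qsc_full_spread =
  fixes n tr tb :: nat
    and alive :: "nat \<Rightarrow> nat \<Rightarrow> bool"
    and NR NB :: "nat \<Rightarrow> nat \<Rightarrow> nat set"
    and chooseMsg :: "nat \<Rightarrow> nat \<Rightarrow> 'm history \<Rightarrow> 'm"
    and pickBest :: "nat \<Rightarrow> nat \<Rightarrow> 'm history set \<Rightarrow> 'm history"
  assumes tr_pos: "0 < tr" and tb_pos: "0 < tb"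
    and tsb: "\<And>\<omega>. is_TSB n tr tb n alive NR NB (qsc_msg chooseMsg pickBest NR NB \<omega>)"
    and pick_best: "\<And>j t H. finite H \<Longrightarrow> H \<noteq> {} \<Longrightarrow> is_best (pickBest j t H) H"
begin

(* The nodes whose round-s proposal can be the best of a set that node i sees reliably broadcast
  at the second step. *)
definition candidates :: "nat \<Rightarrow> nat \<Rightarrow> nat set" where
  "candidates s i = \<Union>(NB (2 * s) ` NB (Suc (2 * s)) i)"

definition delivery_condition :: "(nat \<times> nat \<Rightarrow> real) \<Rightarrow> nat \<Rightarrow> nat \<Rightarrow> bool" where
  "delivery_condition \<omega> s i \<longleftrightarrow>
     (\<exists>l\<in>candidates s i. is_strict_max_on (NR (2 * s) i) (\<lambda>l. \<omega> (s, l)) l)"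

lemma NR_subset: "j \<in> {1..n} \<Longrightarrow> NR t j \<subseteq> {1..n}"
  using is_TSB_member(1)[OF tsb] by blast

lemma candidates_subset: "i \<in> {1..n} \<Longrightarrow> candidates s i \<subseteq> {1..n}"
  unfolding candidates_def using is_TSB_member(1)[OF tsb] by blast

lemma card_candidates:
  assumes i: "i \<in> {1..n}" and alive_i: "alive (2 * s + 2) i"
  shows "tb \<le> card (candidates s i)"
proof -
  obtain k where k: "k \<in> NB (Suc (2 * s)) i"
    using is_TSB_card(2)[OF tsb i, of "Suc (2 * s)"] alive_i tb_pos by fastforce
  then have "k \<in> {1..n}" "alive (Suc (2 * s)) k" using is_TSB_member[OF tsb i] by auto
  then have "tb \<le> card (NB (2 * s) k)" by (rule is_TSB_card(2)[OF tsb])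
  also have "\<dots> \<le> card (candidates s i)"
    using k candidates_subset[OF i]
    by (intro card_mono) (auto simp: candidates_def intro: finite_subset)
  finally show ?thesis .
qed

lemma qsc_delivers_iff:
  assumes i: "i \<in> {1..n}" and alive_i: "alive (2 * s + 2) i"
  shows "qsc_delivers chooseMsg pickBest NR NB \<omega> s i \<longleftrightarrow> delivery_condition \<omega> s i"
proof -
  have alive_Suc_i: "alive (Suc (Suc (2 * s))) i" using alive_i by simp
  define H where "H = qsc_hist chooseMsg pickBest NR NB \<omega> s"
  define h1 where "h1 = qsc_h1 chooseMsg H s \<omega>"
  define h2 where "h2 = qsc_h2 chooseMsg pickBest NB H s \<omega>"
  define K where "K = NB (Suc (2 * s)) i"
  define R where "R = NR (Suc (2 * s)) i"
  have sender: "k \<in> {1..n}" "alive (Suc (2 * s)) k" if "k \<in> K \<union> R" for k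
    using is_TSB_member[OF tsb[of \<omega>] i] that unfolding K_def R_def by blast+
  have "is_best (h2 k) (h1 ` NB (2 * s) k)" if "k \<in> K \<union> R" for k
  proof -
    have "NB (2 * s) k \<noteq> {}"
      using is_TSB_card(2)[OF tsb[of \<omega>] sender[OF that]] tb_pos by auto
    then show ?thesis
      using pick_best is_TSB_finite[OF tsb[of \<omega>] sender(1)[OF that]]
      unfolding h2_def qsc_h2_def h1_def by auto
  qed
  moreover have "NB (2 * s) k \<subseteq> NR (2 * s) i" if "k \<in> K \<union> R" for k
  proof
    fix l assume "l \<in> NB (2 * s) k"
    then have "h1 l \<in> h1 ` NR (2 * s) i"
      using is_TSB_full_spread[OF tsb[of \<omega>] i sender[OF that]]
      by (simp add: qsc_msg_round h1_def H_def)
    then show "l \<in> NR (2 * s) i" unfolding h1_def by (simp add: inj_image_mem_iff[OF inj_qsc_h1])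
  qed
  moreover have "h2 ` K \<subseteq> h2 ` R"
    using is_TSB_full_spread[OF tsb[of \<omega>] i i alive_Suc_i]
    by (auto simp: qsc_msg_round h2_def H_def K_def R_def)
  moreover have "is_best (qsc_hist chooseMsg pickBest NR NB \<omega> (Suc s) i) (h2 ` R)"
  proof -
    have "R \<noteq> {}" using is_TSB_card(1)[OF tsb[of \<omega>] i alive_Suc_i] tr_pos by (auto simp: R_def)
    then show ?thesis
      using pick_best is_TSB_finite[OF tsb[of \<omega>] i] by (simp add: h2_def H_def R_def)
  qed
  ultimately have "qsc_hist chooseMsg pickBest NR NB \<omega> (Suc s) i \<in> h2 ` K \<and>
      uniquely_best (qsc_hist chooseMsg pickBest NR NB \<omega> (Suc s) i) (h1 ` NR (2 * s) i) \<longleftrightarrow>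
    (\<exists>l\<in>\<Union>(NB (2 * s) ` K). is_strict_max_on (NR (2 * s) i) (prio \<circ> h1) l)"
    unfolding h1_def by (intro best_of_bests_iff_strict_max inj_qsc_h1) auto
  then show ?thesis
    by (simp add: qsc_delivers_def delivery_condition_def candidates_def h1_def h2_def H_def K_def
        comp_def prio_qsc_h1)
qed

lemma sets_delivery_condition:
  fixes D :: "real measure"
  assumes "sets D = sets borel" "i \<in> {1..n}"
  shows "{\<omega> \<in> space (PiM K (\<lambda>_. D)). delivery_condition \<omega> s i} \<in> sets (PiM K (\<lambda>_. D))"
proof -
  have "finite (candidates s i)" "finite (NR (2 * s) i)"
    using candidates_subset[OF assms(2)] NR_subset[OF assms(2)]
    by (meson finite_atLeastAtMost finite_subset)+
  then show ?thesis
    unfolding delivery_condition_def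
    by (intro sets_PiM_ex_strict_max[where f="\<lambda>l. (s, l)"] assms(1))
qed

lemma prob_delivers_ge:
  fixes D :: "real measure"
  assumes D: "prob_space D" "sets D = sets borel"
    and i: "i \<in> {1..n}" and alive_i: "alive (2 * s + 2) i"
  shows "real tb / real n - tie_prob D n \<le> measure (PiM UNIV (\<lambda>_::nat \<times> nat. D))
    {\<omega> \<in> space (PiM UNIV (\<lambda>_::nat \<times> nat. D)). qsc_delivers chooseMsg pickBest NR NB \<omega> s i}"
proof -
  let ?M = "PiM UNIV (\<lambda>_::nat \<times> nat. D)" and ?U = "candidates s i" and ?p = "tie_prob D n"
  interpret M: prob_space ?M by (rule prob_space_PiM) (use D in auto)
  have n: "0 < n" using i by simp
  have "tb \<le> card ?U" by (rule card_candidates[OF i alive_i])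
  moreover have "card ?U \<le> n" using card_mono[OF _ candidates_subset[OF i]] by simp
  moreover have "0 \<le> ?p" unfolding tie_prob_def by simp
  ultimately have "card ?U * ?p \<le> n * ?p" by (intro mult_right_mono) auto
  with \<open>tb \<le> card ?U\<close> have "real tb - n * ?p \<le> card ?U * (1 - ?p)"
    by (simp add: algebra_simps)
  then have "(real tb - n * ?p) / n \<le> card ?U * (1 - ?p) / n"
    by (rule divide_right_mono) simp
  then have "real tb / n - ?p \<le> card ?U * (1 - ?p) / n"
    using n by (simp add: diff_divide_distrib)
  also have "\<dots> = M.prob {\<omega> \<in> space ?M. \<exists>l\<in>?U. is_strict_max_on {1..n} (\<lambda>l. \<omega> (s, l)) l}"
    using measure_round_ex_strict_max[OF D n candidates_subset[OF i]] by simp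
  also have "\<dots> \<le> M.prob {\<omega> \<in> space ?M. delivery_condition \<omega> s i}"
    using NR_subset[OF i] by (intro M.finite_measure_mono sets_delivery_condition D(2) i)
      (auto simp: delivery_condition_def intro: is_strict_max_on_subset)
  finally show ?thesis using qsc_delivers_iff[OF i alive_i] by simp
qed

lemma indep_events_delivers:
  fixes D :: "real measure"
  assumes D: "prob_space D" "sets D = sets borel" and i: "i \<in> {1..n}"
  shows "prob_space.indep_events (PiM UNIV (\<lambda>_::nat \<times> nat. D))
    (\<lambda>s. {\<omega> \<in> space (PiM UNIV (\<lambda>_::nat \<times> nat. D)). qsc_delivers chooseMsg pickBest NR NB \<omega> s i})
    {s. alive (2 * s + 2) i}"
proof -
  let ?M = "PiM UNIV (\<lambda>_::nat \<times> nat. D)" and ?K = "\<lambda>s. {s} \<times> {1..n}"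
  interpret M: prob_space ?M by (rule prob_space_PiM) (use D in auto)
  have "M.indep_events (\<lambda>s. {\<omega> \<in> space ?M. delivery_condition (restrict \<omega> (?K s)) s i})
      {s. alive (2 * s + 2) i}"
    by (intro indep_events_PiM_blocks D(1) sets_delivery_condition D(2) i)
      (auto simp: disjoint_family_on_def)
  moreover have "delivery_condition (restrict \<omega> (?K s)) s i = delivery_condition \<omega> s i" for s \<omega>
    using candidates_subset[OF i, of s] NR_subset[OF i, of "2 * s"]
    unfolding delivery_condition_def is_strict_max_on_def by (auto simp: subset_iff)
  then have "M.indep_events (\<lambda>s. {\<omega> \<in> space ?M. delivery_condition (restrict \<omega> (?K s)) s i})
      {s. alive (2 * s + 2) i} \<longleftrightarrow> ?thesis"
    unfolding M.indep_events_def_alt using qsc_delivers_iff[OF i] by (intro M.indep_sets_cong) auto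
  ultimately show ?thesis by blast
qed

end

theorem lemma4:
  fixes n tr tb :: nat
    and D :: "real measure"
    and alive :: "nat \<Rightarrow> nat \<Rightarrow> bool"
    and NR NB :: "nat \<Rightarrow> nat \<Rightarrow> nat set"
    and chooseMsg :: "nat \<Rightarrow> nat \<Rightarrow> 'm history \<Rightarrow> 'm"
    and pickBest :: "nat \<Rightarrow> nat \<Rightarrow> 'm history set \<Rightarrow> 'm history"
    and i :: nat
  assumes D_prob: "prob_space D"
    and D_borel: "sets D = sets borel"
    and D_nontrivial: "\<forall>x. measure D {x} < 1"
    and tr_pos: "tr > 0"
    and tb_pos: "tb > 0"
    and crash: "\<forall>t j. alive (Suc t) j \<longrightarrow> alive t j"
    and tsb: "\<forall>\<omega>. is_TSB n tr tb n alive NR NB (qsc_msg chooseMsg pickBest NR NB \<omega>)"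
    and pick_best: "\<forall>j t H. finite H \<longrightarrow> H \<noteq> {} \<longrightarrow> is_best (pickBest j t H) H"
    and i_node: "i \<in> {1..n}"
  shows "(\<forall>s. alive (2 * s+2) i \<longrightarrow>
            prob_space.prob (PiM UNIV (\<lambda>_::nat\<times>nat. D))
              {\<omega> \<in> space (PiM UNIV (\<lambda>_::nat\<times>nat. D)). qsc_delivers chooseMsg pickBest NR NB \<omega> s i}
            \<ge> real tb / real n - tie_prob D n)
       \<and> prob_space.indep_events (PiM UNIV (\<lambda>_::nat\<times>nat. D))
           (\<lambda>s. {\<omega> \<in> space (PiM UNIV (\<lambda>_::nat\<times>nat. D)). qsc_delivers chooseMsg pickBest NR NB \<omega> s i})
           {s. alive (2 * s+2) i}"
proof -
  (* The bound holds without D_nontrivial and crash. *)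
  interpret qsc_full_spread n tr tb alive NR NB chooseMsg pickBest
    using tr_pos tb_pos tsb pick_best by unfold_locales auto
  show ?thesis
    using prob_delivers_ge[OF D_prob D_borel i_node] indep_events_delivers[OF D_prob D_borel i_node]
    by auto
qed

end
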